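(* Fix a center $c$ and bandwidth $r>0$, and let $(p^*,q^* )\in(0,1)^2$ maximize $\ell(p,q,K_{c,r})$ over $[0,1]^2$ with finite value. Then, treating $p=p^*,q=q^*,c$ as fixed and differentiating only through the bandwidth, \[ \Big|\frac{\partial}{\partial r}\ell(p^*,q^*,K_{c,r})\Big|\le\frac{4}{e\,r}. \]
   Context: $B\subset\mathbb{R}^d$ finite nonempty, $m:B\to\{0,1\}$, $M=\{x\in B:m(x)=1\}$. $K_{c,r}(x)=\exp(-\|x-c\|^2/r^2)$. For $p,q\in[0,1]$ and $K:B\to[0,1]$: $g(x)=pK(x)+q(1-K(x))$, $\ell(p,q,K)=\frac{1}{|B|}\big(\sum_{x\in M}\log g(x)+\sum_{x\in B\setminus M}\log(1-g(x))\big)$. *)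

theory Defs
  imports "HOL-Analysis.Analysis"
begin

definition kern :: "'a::euclidean_space \<Rightarrow> real \<Rightarrow> 'a \<Rightarrow> real" where
  "kern c r x = exp (- (norm (x - c))\<^sup>2 / r\<^sup>2)"

definition marked :: "'a set \<Rightarrow> ('a \<Rightarrow> nat) \<Rightarrow> 'a set" where
  "marked B m = {x \<in> B. m x = 1}"

definition gfun :: "real \<Rightarrow> real \<Rightarrow> ('a \<Rightarrow> real) \<Rightarrow> 'a \<Rightarrow> real" where
  "gfun p q K x = p * K x + q * (1 - K x)"

text \<open>Log-likelihood (real-valued; meaningful when finite, see ll_finite).\<close>
definition ll :: "'a set \<Rightarrow> ('a \<Rightarrow> nat) \<Rightarrow> real \<Rightarrow> real \<Rightarrow> ('a \<Rightarrow> real) \<Rightarrow> real" where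
  "ll B m p q K = (1 / real (card B)) *
     ((\<Sum>x\<in>marked B m. ln (gfun p q K x)) + (\<Sum>x\<in>B - marked B m. ln (1 - gfun p q K x)))"

definition ll_finite :: "'a set \<Rightarrow> ('a \<Rightarrow> nat) \<Rightarrow> real \<Rightarrow> real \<Rightarrow> ('a \<Rightarrow> real) \<Rightarrow> bool" where
  "ll_finite B m p q K \<longleftrightarrow>
     (\<forall>x\<in>marked B m. gfun p q K x > 0) \<and> (\<forall>x\<in>B - marked B m. 1 - gfun p q K x > 0)"

end

theory Submission
  imports Defs
begin

text \<open>Write \<open>g = p K + q (1 - K)\<close> and \<open>M = marked B m\<close>. At a maximiser, rescaling
  \<open>(p, q)\<close> to \<open>(y p, y q)\<close> multiplies \<open>g\<close> by \<open>y\<close>, and rescaling \<open>(1 - p, 1 - q)\<close> by \<open>y\<close>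
  multiplies \<open>1 - g\<close> by \<open>y\<close>; the first-order conditions at \<open>y = 1\<close> say that the sums of
  \<open>1 / g\<close> over \<open>M\<close> and of \<open>1 / (1 - g)\<close> over \<open>B - M\<close> both equal \<open>|B|\<close>. The bandwidth
  derivative of the likelihood is \<open>(p - q) / |B|\<close> times the difference of the same sums with
  weights \<open>\<partial>\<^sub>r K = (2 / r) t e\<^sup>-\<^sup>t\<close>, \<open>t = |x - c|\<^sup>2 / r\<^sup>2\<close>, and \<open>0 \<le> t e\<^sup>-\<^sup>t \<le> 1 / e\<close>.\<close>

lemma convex_comb_in_unit_interval:
  fixes p q k :: real
  assumes "p \<in> {0<..<1}" "q \<in> {0<..<1}" "k \<in> {0..1}"
  shows "p * k + q * (1 - k) \<in> {0<..<1}"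
proof -
  have "k * p + (1 - k) * q < 1" "k * (- p) + (1 - k) * (- q) < 0"
    using assms by (intro convex_bound_lt; simp)+
  then show ?thesis by (simp add: algebra_simps)
qed

lemma mult_in_unit_interval_near_one:
  fixes p y :: real
  assumes "p \<in> {0<..<1}" "\<bar>1 - y\<bar> < 1 - p"
  shows "y * p \<in> {0<..<1}"
proof -
  have y: "0 < y" "y < 2 - p" using assms by auto
  then have "y * p < (2 - p) * p"
    using assms by (intro mult_strict_right_mono) auto
  also have "\<dots> = 1 - (1 - p)\<^sup>2"
    by (simp add: power2_eq_square algebra_simps)
  also have "\<dots> \<le> 1" by simp
  finally show ?thesis using y assms by auto
qed

lemma kern_in_unit_interval: "kern c r x \<in> {0<..1}"
  unfolding kern_def by (auto intro: divide_nonneg_nonneg)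

lemma gfun_kern_in_unit_interval:
  assumes "p \<in> {0<..<1}" "q \<in> {0<..<1}"
  shows "gfun p q (kern c r) x \<in> {0<..<1}"
  unfolding gfun_def using kern_in_unit_interval[of c r x]
  by (intro convex_comb_in_unit_interval assms) auto

lemma ll_finite_kern:
  assumes "p \<in> {0<..<1}" "q \<in> {0<..<1}"
  shows "ll_finite B m p q (kern c r)"
  using gfun_kern_in_unit_interval[OF assms] unfolding ll_finite_def by auto

lemma mult_exp_neg_le:
  fixes t :: real
  shows "t * exp (- t) \<le> exp (- 1)"
proof -
  have "t \<le> exp (t - 1)"
    using exp_ge_add_one_self[of "t - 1"] by simp
  then show ?thesis by (simp add: exp_diff exp_minus field_simps)
qed

definition kern_deriv :: "'a::euclidean_space \<Rightarrow> real \<Rightarrow> 'a \<Rightarrow> real" where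
  "kern_deriv c r x = 2 * (norm (x - c))\<^sup>2 / r ^ 3 * kern c r x"

lemma kern_has_real_derivative:
  assumes "r > 0"
  shows "((\<lambda>s. kern c s x) has_real_derivative kern_deriv c r x) (at r)"
  unfolding kern_def kern_deriv_def using assms
  by (auto intro!: derivative_eq_intros simp: field_simps power2_eq_square power3_eq_cube)

lemma kern_deriv_bounds:
  assumes "r > 0"
  shows "kern_deriv c r x \<in> {0..2 / (exp 1 * r)}"
proof -
  define t where "t = (norm (x - c))\<^sup>2 / r\<^sup>2"
  have eq: "kern_deriv c r x = 2 / r * (t * exp (- t))"
    unfolding kern_deriv_def kern_def t_def using assms
    by (simp add: field_simps power3_eq_cube power2_eq_square)
  have "2 / r * (t * exp (- t)) \<le> 2 / r * exp (- 1)"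
    using assms mult_exp_neg_le[of t] by (intro mult_left_mono) auto
  also have "\<dots> = 2 / (exp 1 * r)"
    by (simp add: exp_minus field_simps)
  finally show ?thesis
    using assms unfolding eq by (simp add: t_def)
qed

lemma sum_inverse_eq_card_if_max_under_scaling:
  fixes g :: "'a \<Rightarrow> real"
  assumes "finite M" "finite N" "\<And>x. x \<in> M \<Longrightarrow> g x > 0"
    and "\<And>x. x \<in> N \<Longrightarrow> g x < 1" and "d > 0"
    and max: "\<And>y. \<bar>1 - y\<bar> < d \<Longrightarrow>
      (\<Sum>x\<in>M. ln (y * g x)) + (\<Sum>x\<in>N. ln (1 - y * g x)) \<le>
      (\<Sum>x\<in>M. ln (g x)) + (\<Sum>x\<in>N. ln (1 - g x))"
  shows "(\<Sum>x\<in>N. 1 / (1 - g x)) = card M + card N"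
proof -
  let ?F = "\<lambda>y. (\<Sum>x\<in>M. ln (y * g x)) + (\<Sum>x\<in>N. ln (1 - y * g x))"
  have "((\<lambda>y. ln (y * g x)) has_real_derivative 1) (at 1)" if "x \<in> M" for x
    using assms(3)[OF that] by (auto intro!: derivative_eq_intros)
  moreover have "((\<lambda>y. ln (1 - y * g x)) has_real_derivative - g x / (1 - g x)) (at 1)"
    if "x \<in> N" for x
    using assms(4)[OF that] by (auto intro!: derivative_eq_intros simp: field_simps)
  ultimately have "(?F has_real_derivative (\<Sum>x\<in>M. 1) + (\<Sum>x\<in>N. - g x / (1 - g x))) (at 1)"
    by (intro DERIV_add DERIV_sum) auto
  then have "(\<Sum>x\<in>M. 1) + (\<Sum>x\<in>N. - g x / (1 - g x)) = 0"
    by (rule DERIV_local_max[OF _ \<open>d > 0\<close>]) (use max in auto)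
  then have "(\<Sum>x\<in>N. g x / (1 - g x)) = card M"
    by (simp add: sum_negf)
  moreover have "(\<Sum>x\<in>N. 1 / (1 - g x)) = (\<Sum>x\<in>N. 1 + g x / (1 - g x))"
  proof (rule sum.cong)
    fix x assume "x \<in> N"
    with assms(4) have "g x < 1" by blast
    then show "1 / (1 - g x) = 1 + g x / (1 - g x)" by (simp add: field_simps)
  qed simp
  ultimately show ?thesis by (simp add: sum.distrib)
qed

lemma card_mult_ll:
  assumes "finite B" "B \<noteq> {}"
  shows "card B * ll B m p q K =
    (\<Sum>x\<in>marked B m. ln (gfun p q K x)) + (\<Sum>x\<in>B - marked B m. ln (1 - gfun p q K x))"
  using assms unfolding ll_def by simp

lemma ll_max_sum_inverse_eq_card:
  fixes K :: "'a \<Rightarrow> real"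
  assumes "finite B" "B \<noteq> {}" "\<forall>x\<in>B. K x \<in> {0..1}"
    and ps: "ps \<in> {0<..<1}" and qs: "qs \<in> {0<..<1}"
    and max: "\<And>p q. p \<in> {0<..<1} \<Longrightarrow> q \<in> {0<..<1} \<Longrightarrow> ll B m p q K \<le> ll B m ps qs K"
  shows "(\<Sum>x\<in>marked B m. 1 / gfun ps qs K x) = card B"
    and "(\<Sum>x\<in>B - marked B m. 1 / (1 - gfun ps qs K x)) = card B"
proof -
  define M where "M = marked B m"
  define g where "g = gfun ps qs K"
  have fin: "finite M" "finite (B - M)" and card: "card M + card (B - M) = card B"
    using assms(1) card_Diff_subset[of M B] card_mono[of B M]
    unfolding M_def marked_def by (auto intro: finite_subset)
  have g01: "g x \<in> {0<..<1}" if "x \<in> B" for x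
    unfolding g_def gfun_def using assms(3) that ps qs by (intro convex_comb_in_unit_interval) auto
  have max_sums: "(\<Sum>x\<in>M. ln (gfun p q K x)) + (\<Sum>x\<in>B - M. ln (1 - gfun p q K x)) \<le>
      (\<Sum>x\<in>M. ln (g x)) + (\<Sum>x\<in>B - M. ln (1 - g x))"
    if "p \<in> {0<..<1}" "q \<in> {0<..<1}" for p q
    using max[OF that] assms(1,2) unfolding M_def g_def card_mult_ll[OF assms(1,2), symmetric]
    by (simp add: card_gt_0_iff)
  have "(\<Sum>x\<in>B - M. 1 / (1 - g x)) = card M + card (B - M)"
  proof (rule sum_inverse_eq_card_if_max_under_scaling[OF fin])
    show "0 < min (1 - ps) (1 - qs)" using ps qs by simp
    fix y assume "\<bar>1 - y\<bar> < min (1 - ps) (1 - qs)"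
    then have "y * ps \<in> {0<..<1}" "y * qs \<in> {0<..<1}"
      using ps qs by (intro mult_in_unit_interval_near_one; simp)+
    from max_sums[OF this]
    show "(\<Sum>x\<in>M. ln (y * g x)) + (\<Sum>x\<in>B - M. ln (1 - y * g x))
      \<le> (\<Sum>x\<in>M. ln (g x)) + (\<Sum>x\<in>B - M. ln (1 - g x))"
      unfolding g_def gfun_def by (simp add: algebra_simps)
  qed (use g01 in \<open>auto simp: M_def marked_def\<close>)
  then show "(\<Sum>x\<in>B - marked B m. 1 / (1 - gfun ps qs K x)) = card B"
    using card unfolding M_def g_def by simp
  have "(\<Sum>x\<in>M. 1 / (1 - (1 - g x))) = card (B - M) + card M"
  proof (rule sum_inverse_eq_card_if_max_under_scaling[OF fin(2,1)])
    show "0 < min ps qs" using ps qs by simp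
    fix y assume "\<bar>1 - y\<bar> < min ps qs"
    then have "y * (1 - ps) \<in> {0<..<1}" "y * (1 - qs) \<in> {0<..<1}"
      using ps qs by (intro mult_in_unit_interval_near_one; simp)+
    then have "1 - y * (1 - ps) \<in> {0<..<1}" "1 - y * (1 - qs) \<in> {0<..<1}"
      by auto
    from max_sums[OF this]
    show "(\<Sum>x\<in>B - M. ln (y * (1 - g x))) + (\<Sum>x\<in>M. ln (1 - y * (1 - g x)))
      \<le> (\<Sum>x\<in>B - M. ln (1 - g x)) + (\<Sum>x\<in>M. ln (1 - (1 - g x)))"
      unfolding g_def gfun_def by (simp add: algebra_simps)
  qed (use g01 in \<open>auto simp: M_def marked_def\<close>)
  then show "(\<Sum>x\<in>marked B m. 1 / gfun ps qs K x) = card B"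
    using card unfolding M_def g_def by simp
qed

lemma ll_kern_has_real_derivative:
  assumes "r > 0" "ps \<in> {0<..<1}" "qs \<in> {0<..<1}"
  shows "((\<lambda>s. ll B m ps qs (kern c s)) has_real_derivative
    (ps - qs) / card B *
      ((\<Sum>x\<in>marked B m. kern_deriv c r x / gfun ps qs (kern c r) x) -
       (\<Sum>x\<in>B - marked B m. kern_deriv c r x / (1 - gfun ps qs (kern c r) x)))) (at r)"
proof -
  let ?g = "gfun ps qs (kern c r)"
  have g01: "?g x \<in> {0<..<1}" for x
    using assms(2,3) by (rule gfun_kern_in_unit_interval)
  have "((\<lambda>s. ln (gfun ps qs (kern c s) x)) has_real_derivative
      (ps - qs) * (kern_deriv c r x / ?g x)) (at r)" for x
    using g01[of x] unfolding gfun_def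
    by (auto intro!: derivative_eq_intros kern_has_real_derivative[OF assms(1)]
        simp: field_simps)
  moreover have "((\<lambda>s. ln (1 - gfun ps qs (kern c s) x)) has_real_derivative
      - ((ps - qs) * (kern_deriv c r x / (1 - ?g x)))) (at r)" for x
    using g01[of x] unfolding gfun_def
    by (auto intro!: derivative_eq_intros kern_has_real_derivative[OF assms(1)]
        simp: field_simps)
  ultimately have "((\<lambda>s. ll B m ps qs (kern c s)) has_real_derivative
      1 / card B * ((\<Sum>x\<in>marked B m. (ps - qs) * (kern_deriv c r x / ?g x)) +
        (\<Sum>x\<in>B - marked B m. - ((ps - qs) * (kern_deriv c r x / (1 - ?g x)))))) (at r)"
    unfolding ll_def by (intro DERIV_cmult DERIV_add DERIV_sum)
  then show ?thesis
    by (rule DERIV_cong) (simp add: sum_distrib_left sum_negf right_diff_distrib)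
qed

lemma sum_div_le_mult_sum_inverse:
  fixes k w :: "'a \<Rightarrow> real"
  assumes "\<And>x. x \<in> A \<Longrightarrow> k x \<in> {0..C}" "\<And>x. x \<in> A \<Longrightarrow> w x > 0"
  shows "(\<Sum>x\<in>A. k x / w x) \<in> {0..C * (\<Sum>x\<in>A. 1 / w x)}"
proof -
  have "(\<Sum>x\<in>A. k x / w x) \<le> (\<Sum>x\<in>A. C / w x)"
    using assms by (intro sum_mono divide_right_mono) (auto intro: less_imp_le)
  moreover have "0 \<le> (\<Sum>x\<in>A. k x / w x)"
    using assms by (intro sum_nonneg divide_nonneg_pos) auto
  ultimately show ?thesis by (simp add: sum_distrib_left)
qed

lemma abs_scaled_diff_le:
  fixes a n S T C :: real
  assumes "\<bar>a\<bar> \<le> 1" "n > 0" "S \<in> {0..C * n}" "T \<in> {0..C * n}"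
  shows "\<bar>a / n * (S - T)\<bar> \<le> C"
proof -
  have "\<bar>S - T\<bar> \<le> C * n" using assms(3,4) by auto
  then have "\<bar>a\<bar> * \<bar>S - T\<bar> \<le> 1 * (C * n)"
    using assms(1) by (intro mult_mono) auto
  moreover have "\<bar>a / n * (S - T)\<bar> = \<bar>a\<bar> * \<bar>S - T\<bar> / n"
    using assms(2) by (simp add: abs_mult)
  ultimately show ?thesis
    using assms(2) by (simp add: divide_le_eq)
qed

theorem lemmaA6:
  fixes B :: "'a::euclidean_space set" and m :: "'a \<Rightarrow> nat"
    and c :: 'a and r ps qs :: real
  assumes "finite B" and "B \<noteq> {}"
    and "\<forall>x\<in>B. m x \<in> {0, 1}"
    and "r > 0"
    and "ps \<in> {0<..<1}" and "qs \<in> {0<..<1}"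
    and "ll_finite B m ps qs (kern c r)"
    and "\<forall>p\<in>{0..1}. \<forall>q\<in>{0..1}. ll_finite B m p q (kern c r) \<longrightarrow>
           ll B m p q (kern c r) \<le> ll B m ps qs (kern c r)"
  shows "\<exists>D. ((\<lambda>s. ll B m ps qs (kern c s)) has_real_derivative D) (at r)
             \<and> \<bar>D\<bar> \<le> 4 / (exp 1 * r)"
proof -
  \<comment> \<open>Neither the 0/1 values of \<open>m\<close> nor \<open>ll_finite\<close> at the maximiser are needed, and the
    argument gives the sharper bound \<open>C = 2 / (e r)\<close>.\<close>
  define g where "g = gfun ps qs (kern c r)"
  define C where "C = 2 / (exp 1 * r)"
  have max: "ll B m p q (kern c r) \<le> ll B m ps qs (kern c r)"
    if "p \<in> {0<..<1}" "q \<in> {0<..<1}" for p q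
    using assms(8) ll_finite_kern[OF that, of B m c r] that by auto
  have "\<forall>x\<in>B. kern c r x \<in> {0..1}"
    using kern_in_unit_interval[of c r] by (metis atLeastAtMost_iff greaterThanAtMost_iff less_eq_real_def)
  then have sum_inverse: "(\<Sum>x\<in>marked B m. 1 / g x) = card B"
      "(\<Sum>x\<in>B - marked B m. 1 / (1 - g x)) = card B"
    using ll_max_sum_inverse_eq_card[OF assms(1,2) _ assms(5,6)] max unfolding g_def by blast+
  have g: "0 < g x" "0 < 1 - g x" for x
    using gfun_kern_in_unit_interval[OF assms(5,6), of c r x] unfolding g_def by auto
  have kd: "kern_deriv c r x \<in> {0..C}" for x
    unfolding C_def by (rule kern_deriv_bounds[OF assms(4)])
  have "(\<Sum>x\<in>marked B m. kern_deriv c r x / g x) \<in> {0..C * card B}"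
    "(\<Sum>x\<in>B - marked B m. kern_deriv c r x / (1 - g x)) \<in> {0..C * card B}"
    using sum_div_le_mult_sum_inverse[of "marked B m" "kern_deriv c r" C g]
      sum_div_le_mult_sum_inverse[of "B - marked B m" "kern_deriv c r" C "\<lambda>x. 1 - g x"]
    unfolding sum_inverse using kd g by blast+
  then have "\<bar>(ps - qs) / card B * ((\<Sum>x\<in>marked B m. kern_deriv c r x / g x) -
      (\<Sum>x\<in>B - marked B m. kern_deriv c r x / (1 - g x)))\<bar> \<le> C"
    using assms(1,2,5,6) by (intro abs_scaled_diff_le) (auto simp: card_gt_0_iff)
  moreover have "C \<le> 4 / (exp 1 * r)"
    unfolding C_def using assms(4) by (simp add: frac_le)
  ultimately show ?thesis
    using ll_kern_has_real_derivative[OF assms(4-6)] unfolding g_def by fastforce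
qed

end
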